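(* Let $M\le V$ be a subspace such that there is an $X\in\mathcal G$ with $M\le X$ and $\dim(X/M)=1$, and let $\mathcal G[M\rangle:=\{E\le V\mid M\le E \text{ and } \dim(E/M)=1\}$ (the star with centre $M$). Then: (1) $\mathcal G[M\rangle\subseteq\mathcal G$; (2) any two distinct elements $E,E'\in\mathcal G[M\rangle$ are adjacent; (3) two adjacent elements $E,E'\in\mathcal G$ both belong to $\mathcal G[M\rangle$ if and only if $E\cap E'=M$.
   Context: $K$ is a (not necessarily commutative) field and $V$ is a left vector space over $K$ of arbitrary (possibly infinite) dimension with $\dim V>2$. $\mathcal G:=\{X\le V\mid X\cong V/X\}$ is the set of subspaces of $V$ isomorphic (as $K$-vector spaces) to their quotient space, assumed nonempty. Dimensions are vector space dimensions. Two elements $X,Y\in\mathcal G$ are called adjacent if $\dim((X+Y)/X)=\dim((X+Y)/Y)=1$, equivalently $\dim(X/(X\cap Y))=\dim(Y/(X\cap Y))=1$. *)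

theory Defs
  imports Main
begin

text \<open>Left vector space over a (not necessarily commutative) field, i.e. a division ring.
  The whole type 'v plays the role of V.\<close>

locale left_vector_space =
  fixes scale :: "'k::division_ring \<Rightarrow> 'v::ab_group_add \<Rightarrow> 'v"
  assumes scale_right_distrib: "scale a (x + y) = scale a x + scale a y"
    and scale_left_distrib: "scale (a + b) x = scale a x + scale b x"
    and scale_scale: "scale a (scale b x) = scale (a * b) x"
    and scale_one: "scale 1 x = x"

definition subspace :: "('k::division_ring \<Rightarrow> 'v::ab_group_add \<Rightarrow> 'v) \<Rightarrow> 'v set \<Rightarrow> bool" where
  "subspace scale S \<longleftrightarrow> 0 \<in> S \<and> (\<forall>x\<in>S. \<forall>y\<in>S. x + y \<in> S) \<and> (\<forall>a. \<forall>x\<in>S. scale a x \<in> S)"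

definition lin_indep :: "('k::division_ring \<Rightarrow> 'v::ab_group_add \<Rightarrow> 'v) \<Rightarrow> 'v set \<Rightarrow> bool" where
  "lin_indep scale S \<longleftrightarrow> finite S \<and>
     (\<forall>c. (\<Sum>x\<in>S. scale (c x) x) = 0 \<longrightarrow> (\<forall>x\<in>S. c x = 0))"

definition dim_gt_2 :: "('k::division_ring \<Rightarrow> 'v::ab_group_add \<Rightarrow> 'v) \<Rightarrow> bool" where
  "dim_gt_2 scale \<longleftrightarrow> (\<exists>S. lin_indep scale S \<and> card S = 3)"

definition ssum :: "'v::ab_group_add set \<Rightarrow> 'v set \<Rightarrow> 'v set" where
  "ssum X Y = {x + y | x y. x \<in> X \<and> y \<in> Y}"

text \<open>dim(E/M) = 1 for subspaces M \<le> E: E/M is spanned by one nonzero coset v + M.\<close>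
definition quot_dim_one :: "('k::division_ring \<Rightarrow> 'v::ab_group_add \<Rightarrow> 'v) \<Rightarrow> 'v set \<Rightarrow> 'v set \<Rightarrow> bool" where
  "quot_dim_one scale E M \<longleftrightarrow> subspace scale M \<and> subspace scale E \<and> M \<subseteq> E \<and>
     (\<exists>v\<in>E. v \<notin> M \<and> E = {m + scale a v | m a. m \<in> M})"

text \<open>The quotient space V/X: its elements are the cosets v + X, with the
  (well-defined) operations (v+X)+(w+X) = (v+w)+X and a(v+X) = av+X.\<close>
definition coset :: "'v::ab_group_add set \<Rightarrow> 'v \<Rightarrow> 'v set" where
  "coset X v = {v + x | x. x \<in> X}"

definition quot :: "'v::ab_group_add set \<Rightarrow> 'v set set" where
  "quot X = range (coset X)"

definition iso_to_quot :: "('k::division_ring \<Rightarrow> 'v::ab_group_add \<Rightarrow> 'v) \<Rightarrow> 'v set \<Rightarrow> bool" where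
  "iso_to_quot scale X \<longleftrightarrow> (\<exists>f. bij_betw f X (quot X) \<and>
     (\<forall>x\<in>X. \<forall>y\<in>X. \<forall>v w. f x = coset X v \<longrightarrow> f y = coset X w \<longrightarrow> f (x + y) = coset X (v + w)) \<and>
     (\<forall>x\<in>X. \<forall>a v. f x = coset X v \<longrightarrow> f (scale a x) = coset X (scale a v)))"

definition Gr :: "('k::division_ring \<Rightarrow> 'v::ab_group_add \<Rightarrow> 'v) \<Rightarrow> 'v set set" where
  "Gr scale = {X. subspace scale X \<and> iso_to_quot scale X}"

definition adjacent :: "('k::division_ring \<Rightarrow> 'v::ab_group_add \<Rightarrow> 'v) \<Rightarrow> 'v set \<Rightarrow> 'v set \<Rightarrow> bool" where
  "adjacent scale X Y \<longleftrightarrow> quot_dim_one scale (ssum X Y) X \<and> quot_dim_one scale (ssum X Y) Y"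

definition star :: "('k::division_ring \<Rightarrow> 'v::ab_group_add \<Rightarrow> 'v) \<Rightarrow> 'v set \<Rightarrow> 'v set set" where
  "star scale M = {E. subspace scale E \<and> M \<subseteq> E \<and> quot_dim_one scale E M}"

end

theory Submission
  imports Defs
begin

text \<open>
  Parts (2) and (3) are elementary: two distinct elements \<open>M + Ke\<close>, \<open>M + Ke'\<close> of the star
  span \<open>M + Ke + Ke'\<close>, which has codimension one over each; conversely, if adjacent \<open>E, E'\<close>
  meet in \<open>M\<close>, then \<open>E/M\<close> embeds into \<open>(E + E')/E'\<close>, a line.
  For part (1), write \<open>X = M + Kx\<close> and \<open>E = M + Ke\<close> with \<open>E \<noteq> X\<close>. Choose (by Zorn) a linear
  functional \<open>\<xi>\<close> with \<open>\<xi> x = 1\<close> vanishing on \<open>M + K(e - x)\<close>. The transvection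
  \<open>u \<mapsto> u + \<xi>(u)(e - x)\<close> is a linear automorphism of \<open>V\<close> mapping \<open>X\<close> onto \<open>E\<close>, and every
  linear automorphism carries an isomorphism \<open>X \<cong> V/X\<close> to one \<open>E \<cong> V/E\<close>.
\<close>

definition adjoin :: "('k::division_ring \<Rightarrow> 'v::ab_group_add \<Rightarrow> 'v) \<Rightarrow> 'v set \<Rightarrow> 'v \<Rightarrow> 'v set" where
  "adjoin scale S v = {s + scale a v | s a. s \<in> S}"

lemma image_coset:
  assumes "\<And>u w. f (u + w) = f u + f w"
  shows "f ` coset X v = coset (f ` X) (f v)"
proof
  show "f ` coset X v \<subseteq> coset (f ` X) (f v)"
    unfolding coset_def by (auto simp: assms)
  show "coset (f ` X) (f v) \<subseteq> f ` coset X v"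
  proof
    fix u assume "u \<in> coset (f ` X) (f v)"
    then obtain x where "x \<in> X" "u = f (v + x)" unfolding coset_def assms by blast
    then show "u \<in> f ` coset X v" unfolding coset_def by blast
  qed
qed

context left_vector_space begin

lemma scale_zero_left [simp]: "scale 0 x = 0"
  using scale_left_distrib[of 0 0 x] by simp

lemma scale_zero_right [simp]: "scale a 0 = 0"
  using scale_right_distrib[of a 0 0] by simp

lemma scale_minus_left: "scale (- a) x = - scale a x"
  using scale_left_distrib[of "- a" a x] by (simp add: eq_neg_iff_add_eq_0)

lemma scale_minus_right: "scale a (- x) = - scale a x"
  using scale_right_distrib[of a "- x" x] by (simp add: eq_neg_iff_add_eq_0)

lemma scale_diff_right: "scale a (x - y) = scale a x - scale a y"
  using scale_right_distrib[of a x "- y"] by (simp add: scale_minus_right)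

lemma scale_diff_left: "scale (a - b) x = scale a x - scale b x"
  using scale_left_distrib[of a "- b" x] by (simp add: scale_minus_left)

lemma scale_inverse_cancel: "a \<noteq> 0 \<Longrightarrow> scale (inverse a) (scale a v) = v"
  by (simp add: scale_scale scale_one)

lemma subspace_zero: "subspace scale S \<Longrightarrow> 0 \<in> S"
  by (simp add: subspace_def)

lemma subspace_add: "subspace scale S \<Longrightarrow> x \<in> S \<Longrightarrow> y \<in> S \<Longrightarrow> x + y \<in> S"
  by (simp add: subspace_def)

lemma subspace_scale: "subspace scale S \<Longrightarrow> x \<in> S \<Longrightarrow> scale a x \<in> S"
  by (simp add: subspace_def)

lemma subspace_neg: "subspace scale S \<Longrightarrow> x \<in> S \<Longrightarrow> - x \<in> S"
  using subspace_scale[of S x "- 1"] by (simp add: scale_minus_left scale_one)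

lemma subspace_diff: "subspace scale S \<Longrightarrow> x \<in> S \<Longrightarrow> y \<in> S \<Longrightarrow> x - y \<in> S"
  using subspace_add[of S x "- y"] subspace_neg[of S y] by simp

lemma subspace_Int: "subspace scale S \<Longrightarrow> subspace scale T \<Longrightarrow> subspace scale (S \<inter> T)"
  by (simp add: subspace_def)

lemma ssum_commute: "ssum S T = ssum T S"
proof -
  have "ssum A B \<subseteq> ssum B A" for A B
    unfolding ssum_def using add.commute by blast
  then show ?thesis by blast
qed

lemma subset_ssum_left: "subspace scale T \<Longrightarrow> S \<subseteq> ssum S T"
  unfolding ssum_def using subspace_zero by force

lemma ssum_self: "subspace scale S \<Longrightarrow> ssum S S = S"
  unfolding ssum_def using subspace_zero subspace_add by force

lemma subspace_adjoin:
  assumes S: "subspace scale S"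
  shows "subspace scale (adjoin scale S v)"
  unfolding subspace_def adjoin_def
proof (intro conjI ballI allI)
  show "0 \<in> {s + scale a v | s a. s \<in> S}"
    using subspace_zero[OF S] by (intro CollectI exI[of _ 0] exI[of _ "0::'k"]) simp
next
  fix u w assume "u \<in> {s + scale a v | s a. s \<in> S}" "w \<in> {s + scale a v | s a. s \<in> S}"
  then obtain s a s' a' where "s \<in> S" "s' \<in> S" "u = s + scale a v" "w = s' + scale a' v"
    by blast
  then show "u + w \<in> {s + scale a v | s a. s \<in> S}" using subspace_add[OF S]
    by (intro CollectI exI[of _ "s + s'"] exI[of _ "a + a'"]) (simp add: scale_left_distrib algebra_simps)
next
  fix c u assume "u \<in> {s + scale a v | s a. s \<in> S}"
  then obtain s a where "s \<in> S" "u = s + scale a v" by blast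
  moreover have "scale c (s + scale a v) = scale c s + scale (c * a) v"
    by (simp add: scale_right_distrib scale_scale)
  ultimately show "scale c u \<in> {s + scale a v | s a. s \<in> S}" using subspace_scale[OF S] by auto
qed

lemma subset_adjoin: "S \<subseteq> adjoin scale S v"
  unfolding adjoin_def by (force intro: exI[of _ "0::'k"])

lemma mem_adjoin_self: "0 \<in> S \<Longrightarrow> v \<in> adjoin scale S v"
  unfolding adjoin_def by (force intro: exI[of _ 0] exI[of _ "1::'k"] simp: scale_one)

lemma adjoin_subset: "subspace scale T \<Longrightarrow> S \<subseteq> T \<Longrightarrow> v \<in> T \<Longrightarrow> adjoin scale S v \<subseteq> T"
  unfolding adjoin_def using subspace_add subspace_scale by blast

lemma quot_dim_one_iff:
  "quot_dim_one scale E M \<longleftrightarrow> subspace scale M \<and> subspace scale E \<and> M \<subseteq> E \<and>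
     (\<exists>v\<in>E. v \<notin> M \<and> E = adjoin scale M v)"
  by (simp add: quot_dim_one_def adjoin_def)

lemma quot_dim_one_adjoin:
  "subspace scale M \<Longrightarrow> v \<notin> M \<Longrightarrow> quot_dim_one scale (adjoin scale M v) M"
  unfolding quot_dim_one_iff
  using subspace_adjoin subset_adjoin mem_adjoin_self subspace_zero by blast

lemma quot_dim_one_subset:
  assumes q: "quot_dim_one scale E M" and S: "subspace scale S" "M \<subseteq> S"
    and s: "s \<in> S" "s \<in> E" "s \<notin> M"
  shows "E \<subseteq> S"
proof -
  from q obtain v where E: "E = adjoin scale M v" unfolding quot_dim_one_iff by blast
  with s(2) obtain m a where m: "m \<in> M" and s_eq: "s = m + scale a v" unfolding adjoin_def by blast
  have a: "a \<noteq> 0" using m s_eq s(3) by auto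
  have "scale (inverse a) (s - m) \<in> S"
    using m S subspace_diff[OF S(1) s(1)] subspace_scale[OF S(1)] by blast
  moreover have "scale (inverse a) (s - m) = v" using s_eq a scale_inverse_cancel by simp
  ultimately show ?thesis unfolding E using adjoin_subset S by simp
qed

lemma quot_dim_one_unique:
  assumes "quot_dim_one scale E M" "quot_dim_one scale E' M" "E' \<subseteq> E"
  shows "E' = E"
proof -
  from assms(2) obtain w where "w \<in> E'" "w \<notin> M" "subspace scale E'" "M \<subseteq> E'"
    unfolding quot_dim_one_def by blast
  then show ?thesis using quot_dim_one_subset[OF assms(1)] assms(3) by blast
qed

lemma quot_dim_one_between:
  assumes "quot_dim_one scale E M" "subspace scale S" "M \<subseteq> S" "S \<subseteq> E"
  shows "S = M \<or> S = E"
  using quot_dim_one_subset[OF assms(1-3)] assms(3,4) by blast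

lemma ssum_adjoin:
  assumes "subspace scale E" "M \<subseteq> E" "0 \<in> M"
  shows "ssum E (adjoin scale M w) = adjoin scale E w"
proof
  show "ssum E (adjoin scale M w) \<subseteq> adjoin scale E w"
  proof
    fix u assume "u \<in> ssum E (adjoin scale M w)"
    then obtain e m a where "e \<in> E" "m \<in> M" "u = e + (m + scale a w)"
      unfolding ssum_def adjoin_def by blast
    then show "u \<in> adjoin scale E w"
      unfolding adjoin_def using assms subspace_add
      by (intro CollectI exI[of _ "e + m"] exI[of _ a]) (auto simp: add.assoc)
  qed
next
  show "adjoin scale E w \<subseteq> ssum E (adjoin scale M w)"
    unfolding ssum_def adjoin_def using assms(3) by force
qed

lemma quot_dim_one_ssum:
  assumes E: "quot_dim_one scale E M" and E': "quot_dim_one scale E' M" and "E \<noteq> E'"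
  shows "quot_dim_one scale (ssum E E') E"
proof -
  from E' obtain w where w: "w \<in> E'" "w \<notin> M" and E'_eq: "E' = adjoin scale M w"
    and M: "subspace scale M" unfolding quot_dim_one_iff by blast
  from E have sE: "subspace scale E" and ME: "M \<subseteq> E" unfolding quot_dim_one_def by auto
  have "w \<notin> E"
  proof
    assume "w \<in> E"
    then have "E' \<subseteq> E" using quot_dim_one_subset[OF E' sE ME] w by blast
    then show False using quot_dim_one_unique[OF E E'] \<open>E \<noteq> E'\<close> by blast
  qed
  moreover have "ssum E E' = adjoin scale E w"
    unfolding E'_eq using ssum_adjoin[OF sE ME subspace_zero[OF M]] .
  ultimately show ?thesis using quot_dim_one_adjoin[OF sE] by simp
qed

lemma star_adjacent:
  assumes "E \<in> star scale M" "E' \<in> star scale M" "E \<noteq> E'"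
  shows "adjacent scale E E'"
  using assms quot_dim_one_ssum[of E M E'] quot_dim_one_ssum[of E' M E] ssum_commute[of E E']
  unfolding adjacent_def star_def by auto

lemma adjacent_imp_neq:
  assumes "subspace scale E" "adjacent scale E E'"
  shows "E \<noteq> E'"
  using assms ssum_self unfolding adjacent_def quot_dim_one_def by blast

lemma quot_dim_one_Int_of_adjacent:
  assumes q: "quot_dim_one scale (ssum E E') E'" and E: "subspace scale E" and E': "subspace scale E'"
  shows "quot_dim_one scale E (E \<inter> E')"
proof -
  from q obtain w where w: "w \<in> ssum E E'" "w \<notin> E'" and sum_eq: "ssum E E' = adjoin scale E' w"
    unfolding quot_dim_one_iff by blast
  then obtain x y where xy: "x \<in> E" "y \<in> E'" "w = x + y" unfolding ssum_def by blast
  have "x \<notin> E'" using xy w(2) subspace_add[OF E', of x y] by blast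
  have "E = adjoin scale (E \<inter> E') x"
  proof
    show "E \<subseteq> adjoin scale (E \<inter> E') x"
    proof
      fix u assume u: "u \<in> E"
      then have "u \<in> adjoin scale E' w" using subset_ssum_left[OF E'] sum_eq by blast
      then obtain m a where m: "m \<in> E'" and u_eq: "u = m + scale a w" unfolding adjoin_def by blast
      have "u - scale a x = m + scale a y" using u_eq xy scale_right_distrib by simp
      then have "u - scale a x \<in> E'" using m xy subspace_add[OF E'] subspace_scale[OF E'] by simp
      moreover have "u - scale a x \<in> E" using u xy subspace_diff[OF E] subspace_scale[OF E] by blast
      ultimately show "u \<in> adjoin scale (E \<inter> E') x"
        unfolding adjoin_def by (intro CollectI exI[of _ "u - scale a x"] exI[of _ a]) simp
    qed
  next
    show "adjoin scale (E \<inter> E') x \<subseteq> E" using adjoin_subset[OF E] xy(1) by blast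
  qed
  moreover have "x \<notin> E \<inter> E'" using \<open>x \<notin> E'\<close> by blast
  ultimately show ?thesis using quot_dim_one_adjoin[OF subspace_Int[OF E E']] by metis
qed

lemma adjacent_in_star_iff:
  assumes E: "subspace scale E" and E': "subspace scale E'" and adj: "adjacent scale E E'"
  shows "E \<in> star scale M \<and> E' \<in> star scale M \<longleftrightarrow> E \<inter> E' = M"
proof
  assume "E \<in> star scale M \<and> E' \<in> star scale M"
  then have qE: "quot_dim_one scale E M" and qE': "quot_dim_one scale E' M"
    unfolding star_def by auto
  then have "M \<subseteq> E \<inter> E'" unfolding quot_dim_one_def by blast
  then have "E \<inter> E' = M \<or> E \<inter> E' = E"
    using quot_dim_one_between[OF qE subspace_Int[OF E E']] by blast
  moreover have "E \<inter> E' \<noteq> E"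
    using quot_dim_one_unique[OF qE' qE] adjacent_imp_neq[OF E adj] by blast
  ultimately show "E \<inter> E' = M" by blast
next
  assume "E \<inter> E' = M"
  moreover have "quot_dim_one scale E (E \<inter> E')" "quot_dim_one scale E' (E' \<inter> E)"
    using quot_dim_one_Int_of_adjacent[OF _ E E'] quot_dim_one_Int_of_adjacent[OF _ E' E]
      adj ssum_commute[of E E'] unfolding adjacent_def by auto
  ultimately show "E \<in> star scale M \<and> E' \<in> star scale M"
    unfolding star_def quot_dim_one_def by (auto simp: Int_commute)
qed

lemma subspace_Union_chain:
  assumes "C \<noteq> {}" and sub: "\<And>S. S \<in> C \<Longrightarrow> subspace scale S"
    and chain: "\<And>S T. S \<in> C \<Longrightarrow> T \<in> C \<Longrightarrow> S \<subseteq> T \<or> T \<subseteq> S"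
  shows "subspace scale (\<Union>C)"
  unfolding subspace_def
proof (intro conjI ballI allI)
  obtain S where "S \<in> C" using \<open>C \<noteq> {}\<close> by blast
  then show "0 \<in> \<Union>C" using subspace_zero[OF sub] by blast
next
  fix u w assume "u \<in> \<Union>C" "w \<in> \<Union>C"
  then obtain S T where ST: "S \<in> C" "T \<in> C" and "u \<in> S" "w \<in> T" by blast
  then have "u + w \<in> S \<or> u + w \<in> T"
    using chain[OF ST] subspace_add[OF sub[OF ST(1)]] subspace_add[OF sub[OF ST(2)]] by blast
  then show "u + w \<in> \<Union>C" using ST by blast
next
  fix a u assume "u \<in> \<Union>C"
  then obtain S where "S \<in> C" "u \<in> S" by blast
  then show "scale a u \<in> \<Union>C" using subspace_scale[OF sub] by blast
qed

text \<open>A maximal subspace containing \<open>S\<^sub>0\<close> but avoiding \<open>x\<close> is a complement of the line \<open>Kx\<close>.\<close>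

lemma complement_of_line_exists:
  assumes S0: "subspace scale S0" and x: "x \<notin> S0"
  shows "\<exists>S. subspace scale S \<and> S0 \<subseteq> S \<and> x \<notin> S \<and> (\<forall>v. \<exists>a. v - scale a x \<in> S)"
proof -
  define \<A> where "\<A> = {S. subspace scale S \<and> S0 \<subseteq> S \<and> x \<notin> S}"
  have "\<forall>C\<in>chains \<A>. \<exists>U\<in>\<A>. \<forall>S\<in>C. S \<subseteq> U"
  proof
    fix C assume C: "C \<in> chains \<A>"
    show "\<exists>U\<in>\<A>. \<forall>S\<in>C. S \<subseteq> U"
    proof (cases "C = {}")
      case True
      then show ?thesis using S0 x unfolding \<A>_def by blast
    next
      case False
      have "subspace scale (\<Union>C)"
        using chainsD2[OF C] by (intro subspace_Union_chain[OF False]) (auto simp: \<A>_def chainsD[OF C])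
      moreover have "S0 \<subseteq> \<Union>C" "x \<notin> \<Union>C" using False chainsD2[OF C] unfolding \<A>_def by auto
      ultimately show ?thesis unfolding \<A>_def by blast
    qed
  qed
  from Zorn_Lemma2[OF this] obtain S where "S \<in> \<A>" and max: "\<And>T. T \<in> \<A> \<Longrightarrow> S \<subseteq> T \<Longrightarrow> T = S"
    by blast
  then have S: "subspace scale S" and "S0 \<subseteq> S" and "x \<notin> S" unfolding \<A>_def by auto
  have "\<exists>a. v - scale a x \<in> S" for v
  proof (cases "v \<in> S")
    case True
    then show ?thesis by (intro exI[of _ 0]) simp
  next
    case False
    then have "adjoin scale S v \<noteq> S" using mem_adjoin_self[OF subspace_zero[OF S]] by blast
    then have "adjoin scale S v \<notin> \<A>" using max[OF _ subset_adjoin] by blast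
    then have "x \<in> adjoin scale S v"
      using subspace_adjoin[OF S] subset_adjoin[of S v] \<open>S0 \<subseteq> S\<close> unfolding \<A>_def by auto
    then obtain s b where s: "s \<in> S" and x_eq: "x = s + scale b v" unfolding adjoin_def by blast
    have "b \<noteq> 0" using s x_eq \<open>x \<notin> S\<close> by auto
    then have "v - scale (inverse b) x = - scale (inverse b) s"
      using x_eq by (simp add: scale_right_distrib scale_inverse_cancel)
    then show ?thesis using subspace_neg[OF S] subspace_scale[OF S s] by metis
  qed
  then show ?thesis using S \<open>S0 \<subseteq> S\<close> \<open>x \<notin> S\<close> by blast
qed

definition linear_functional :: "('v \<Rightarrow> 'k) \<Rightarrow> bool" where
  "linear_functional \<xi> \<longleftrightarrow>
     (\<forall>u w. \<xi> (u + w) = \<xi> u + \<xi> w) \<and> (\<forall>a u. \<xi> (scale a u) = a * \<xi> u)"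

definition linear_map :: "('v \<Rightarrow> 'v) \<Rightarrow> bool" where
  "linear_map f \<longleftrightarrow> (\<forall>u w. f (u + w) = f u + f w) \<and> (\<forall>a u. f (scale a u) = scale a (f u))"

lemma linear_functional_exists:
  assumes "subspace scale S0" "x \<notin> S0"
  shows "\<exists>\<xi>. linear_functional \<xi> \<and> \<xi> x = 1 \<and> (\<forall>s\<in>S0. \<xi> s = 0)"
proof -
  obtain S where S: "subspace scale S" and "S0 \<subseteq> S" "x \<notin> S"
    and complement: "\<And>v. \<exists>a. v - scale a x \<in> S"
    using complement_of_line_exists[OF assms] by blast
  have unique: "a = b" if "v - scale a x \<in> S" "v - scale b x \<in> S" for v a b
  proof (rule ccontr)
    assume "a \<noteq> b"
    have "scale (b - a) x \<in> S"
      using subspace_diff[OF S that] by (simp add: scale_diff_left)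
    then have "scale (inverse (b - a)) (scale (b - a) x) \<in> S" using subspace_scale[OF S] by blast
    then show False using scale_inverse_cancel[of "b - a" x] \<open>a \<noteq> b\<close> \<open>x \<notin> S\<close> by simp
  qed
  define \<xi> where "\<xi> v = (THE a. v - scale a x \<in> S)" for v
  have \<xi>_eq: "\<xi> v = a" if "v - scale a x \<in> S" for v a
    unfolding \<xi>_def using that unique by blast
  have \<xi>_mem: "v - scale (\<xi> v) x \<in> S" for v
    using complement[of v] \<xi>_eq by metis
  have "\<xi> (u + w) = \<xi> u + \<xi> w" for u w
  proof (rule \<xi>_eq)
    have "u + w - scale (\<xi> u + \<xi> w) x = (u - scale (\<xi> u) x) + (w - scale (\<xi> w) x)"
      by (simp add: scale_left_distrib algebra_simps)
    then show "u + w - scale (\<xi> u + \<xi> w) x \<in> S" using subspace_add[OF S \<xi>_mem \<xi>_mem] by metis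
  qed
  moreover have "\<xi> (scale c u) = c * \<xi> u" for c u
  proof (rule \<xi>_eq)
    have "scale c u - scale (c * \<xi> u) x = scale c (u - scale (\<xi> u) x)"
      by (simp add: scale_diff_right scale_scale)
    then show "scale c u - scale (c * \<xi> u) x \<in> S" using subspace_scale[OF S \<xi>_mem] by metis
  qed
  moreover have "\<xi> x = 1" by (rule \<xi>_eq) (simp add: scale_one subspace_zero[OF S])
  moreover have "\<xi> s = 0" if "s \<in> S0" for s
    by (rule \<xi>_eq) (use that \<open>S0 \<subseteq> S\<close> in auto)
  ultimately show ?thesis unfolding linear_functional_def by blast
qed

lemma transvection:
  assumes \<xi>: "linear_functional \<xi>" and "\<xi> d = 0"
  defines "\<tau> \<equiv> \<lambda>u. u + scale (\<xi> u) d" and "\<sigma> \<equiv> \<lambda>u. u - scale (\<xi> u) d"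
  shows "linear_map \<tau>" and "\<And>u. \<sigma> (\<tau> u) = u" and "\<And>u. \<tau> (\<sigma> u) = u"
proof -
  have \<xi>_add: "\<xi> (u + w) = \<xi> u + \<xi> w" and \<xi>_scale: "\<xi> (scale a u) = a * \<xi> u" for u w a
    using \<xi> unfolding linear_functional_def by auto
  have \<xi>_d: "\<xi> (u + scale a d) = \<xi> u" "\<xi> (u - scale a d) = \<xi> u" for u a
    using \<xi>_add[of u "scale a d"] \<xi>_add[of "u - scale a d" "scale a d"] \<xi>_scale[of a d] \<open>\<xi> d = 0\<close>
    by simp_all
  show "linear_map \<tau>"
    unfolding linear_map_def \<tau>_def \<xi>_add \<xi>_scale
    by (simp add: scale_left_distrib scale_right_distrib scale_scale algebra_simps)
  show "\<sigma> (\<tau> u) = u" "\<tau> (\<sigma> u) = u" for u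
    unfolding \<sigma>_def \<tau>_def \<xi>_d by simp_all
qed

lemma linear_map_inverse:
  assumes "linear_map f" "\<And>u. g (f u) = u" "\<And>u. f (g u) = u"
  shows "linear_map g"
  using assms unfolding linear_map_def by metis

lemma adjoin_image:
  assumes "linear_map f"
  shows "f ` adjoin scale S v = adjoin scale (f ` S) (f v)"
proof -
  have f: "f (s + scale a v) = f s + scale a (f v)" for s a
    using assms unfolding linear_map_def by simp
  show ?thesis
  proof
    show "f ` adjoin scale S v \<subseteq> adjoin scale (f ` S) (f v)"
      unfolding adjoin_def by (auto simp: f) blast
    show "adjoin scale (f ` S) (f v) \<subseteq> f ` adjoin scale S v"
    proof
      fix u assume "u \<in> adjoin scale (f ` S) (f v)"
      then obtain s a where "s \<in> S" "u = f (s + scale a v)" unfolding adjoin_def f by blast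
      then show "u \<in> f ` adjoin scale S v" unfolding adjoin_def by blast
    qed
  qed
qed

lemma iso_to_quot_image:
  assumes \<phi>: "linear_map \<phi>" and \<psi>\<phi>: "\<And>u. \<psi> (\<phi> u) = u" and \<phi>\<psi>: "\<And>u. \<phi> (\<psi> u) = u"
    and "iso_to_quot scale X"
  shows "iso_to_quot scale (\<phi> ` X)"
proof -
  define E where "E = \<phi> ` X"
  obtain f where f: "bij_betw f X (quot X)"
    and f_add: "\<forall>x\<in>X. \<forall>y\<in>X. \<forall>v w. f x = coset X v \<longrightarrow> f y = coset X w \<longrightarrow>
        f (x + y) = coset X (v + w)"
    and f_scale: "\<forall>x\<in>X. \<forall>a v. f x = coset X v \<longrightarrow> f (scale a x) = coset X (scale a v)"
    using \<open>iso_to_quot scale X\<close> unfolding iso_to_quot_def by blast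
  have \<phi>_add: "\<phi> (u + w) = \<phi> u + \<phi> w" and \<phi>_scale: "\<phi> (scale a u) = scale a (\<phi> u)" for u w a
    using \<phi> unfolding linear_map_def by auto
  have \<psi>_add: "\<psi> (u + w) = \<psi> u + \<psi> w" and \<psi>_scale: "\<psi> (scale a u) = scale a (\<psi> u)" for u w a
    using linear_map_inverse[OF \<phi> \<psi>\<phi> \<phi>\<psi>] unfolding linear_map_def by auto
  have \<psi>E: "\<psi> ` E = X" unfolding E_def image_image \<psi>\<phi> by simp
  have \<psi>_image_\<phi>_image: "\<psi> ` \<phi> ` A = A" for A unfolding image_image \<psi>\<phi> by simp
  have \<phi>_coset: "\<phi> ` coset X v = coset E (\<phi> v)" for v
    unfolding E_def using image_coset \<phi>_add by blast
  have \<psi>_coset: "\<psi> ` coset E w = coset X (\<psi> w)" for w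
    using image_coset[of \<psi> E w] \<psi>_add unfolding \<psi>E by blast
  define g where "g y = \<phi> ` f (\<psi> y)" for y
  have g_coset: "f (\<psi> y) = coset X (\<psi> p)" if "g y = coset E p" for y p
    using arg_cong[OF that, of "image \<psi>"] unfolding g_def \<psi>_image_\<phi>_image \<psi>_coset .
  have "bij_betw \<psi> E X"
    by (rule bij_betw_byWitness[where f' = \<phi>]) (auto simp: E_def \<psi>\<phi> \<phi>\<psi>)
  moreover have "bij_betw (image \<phi>) (quot X) (quot E)"
  proof (rule bij_betw_byWitness[where f' = "image \<psi>"])
    show "image \<phi> ` quot X \<subseteq> quot E" "image \<psi> ` quot E \<subseteq> quot X"
      unfolding quot_def using \<phi>_coset \<psi>_coset by auto
  qed (simp_all add: image_image \<psi>\<phi> \<phi>\<psi>)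
  ultimately have "bij_betw g E (quot E)"
    using bij_betw_trans[OF bij_betw_trans[OF _ f]] unfolding g_def comp_def by blast
  moreover have "g (y + y') = coset E (p + q)"
    if "y \<in> E" "y' \<in> E" "g y = coset E p" "g y' = coset E q" for y y' p q
  proof -
    have "f (\<psi> y + \<psi> y') = coset X (\<psi> p + \<psi> q)"
      using f_add \<psi>E that g_coset by blast
    then have "g (y + y') = \<phi> ` coset X (\<psi> p + \<psi> q)" unfolding g_def \<psi>_add by simp
    then show ?thesis unfolding \<phi>_coset \<phi>_add \<phi>\<psi> .
  qed
  moreover have "g (scale a y) = coset E (scale a p)" if "y \<in> E" "g y = coset E p" for y a p
  proof -
    have "f (scale a (\<psi> y)) = coset X (scale a (\<psi> p))"
      using f_scale \<psi>E that g_coset by blast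
    then have "g (scale a y) = \<phi> ` coset X (scale a (\<psi> p))" unfolding g_def \<psi>_scale by simp
    then show ?thesis unfolding \<phi>_coset \<phi>_scale \<phi>\<psi> .
  qed
  ultimately show ?thesis unfolding iso_to_quot_def E_def by blast
qed

lemma not_mem_adjoin_diff:
  assumes E: "quot_dim_one scale E M" and "e \<in> E" "e \<notin> M" "x \<notin> E"
  shows "x \<notin> adjoin scale M (e - x)"
proof
  assume "x \<in> adjoin scale M (e - x)"
  then obtain m b where "m \<in> M" and x_eq: "x = m + scale b (e - x)" unfolding adjoin_def by blast
  have sE: "subspace scale E" and "M \<subseteq> E" using E unfolding quot_dim_one_def by auto
  have sum_eq: "scale (1 + b) x = m + scale b e"
    using x_eq by (simp add: scale_left_distrib scale_one scale_diff_right algebra_simps)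
  show False
  proof (cases "1 + b = 0")
    case True
    then have "b = - 1" by (simp add: eq_neg_iff_add_eq_0 add.commute)
    then have "e = m" using sum_eq True by (simp add: scale_minus_left scale_one)
    then show False using \<open>m \<in> M\<close> \<open>e \<notin> M\<close> by simp
  next
    case False
    have "m + scale b e \<in> E"
      using \<open>m \<in> M\<close> \<open>M \<subseteq> E\<close> \<open>e \<in> E\<close> subspace_add[OF sE] subspace_scale[OF sE] by blast
    then have "scale (inverse (1 + b)) (scale (1 + b) x) \<in> E"
      unfolding sum_eq using subspace_scale[OF sE] by blast
    then show False using scale_inverse_cancel[OF False] \<open>x \<notin> E\<close> by simp
  qed
qed

lemma star_member_in_Gr:
  assumes X: "X \<in> Gr scale" "quot_dim_one scale X M" and E: "quot_dim_one scale E M"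
  shows "E \<in> Gr scale"
proof (cases "E = X")
  case False
  from X(2) obtain x where x: "x \<in> X" "x \<notin> M" and X_eq: "X = adjoin scale M x"
    and M: "subspace scale M" unfolding quot_dim_one_iff by blast
  from E obtain e where e: "e \<in> E" "e \<notin> M" and E_eq: "E = adjoin scale M e"
    and sE: "subspace scale E" and "M \<subseteq> E" unfolding quot_dim_one_iff by blast
  have "x \<notin> E"
    using quot_dim_one_subset[OF X(2) sE \<open>M \<subseteq> E\<close> _ x] quot_dim_one_unique[OF E X(2)] False
    by blast
  obtain \<xi> where \<xi>: "linear_functional \<xi>" "\<xi> x = 1" and \<xi>_zero: "\<forall>s\<in>adjoin scale M (e - x). \<xi> s = 0"
    using linear_functional_exists[OF subspace_adjoin[OF M] not_mem_adjoin_diff[OF E e \<open>x \<notin> E\<close>]]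
    by blast
  have "\<xi> (e - x) = 0" and \<xi>_M: "\<And>m. m \<in> M \<Longrightarrow> \<xi> m = 0"
    using \<xi>_zero mem_adjoin_self[OF subspace_zero[OF M]] subset_adjoin by blast+
  define \<tau> where "\<tau> u = u + scale (\<xi> u) (e - x)" for u
  define \<sigma> where "\<sigma> u = u - scale (\<xi> u) (e - x)" for u
  have \<tau>: "linear_map \<tau>" "\<And>u. \<sigma> (\<tau> u) = u" "\<And>u. \<tau> (\<sigma> u) = u"
    unfolding \<tau>_def[abs_def] \<sigma>_def[abs_def]
    by (rule transvection[OF \<xi>(1) \<open>\<xi> (e - x) = 0\<close>])+
  have "\<tau> ` M = M" using \<xi>_M unfolding \<tau>_def by simp
  moreover have "\<tau> x = e" unfolding \<tau>_def \<xi>(2) by (simp add: scale_one)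
  ultimately have "\<tau> ` X = E" unfolding X_eq E_eq adjoin_image[OF \<tau>(1)] by simp
  then show ?thesis
    using iso_to_quot_image[OF \<tau>] X(1) sE unfolding Gr_def by blast
qed (use X in simp)

end

theorem lemma2p1:
  fixes scale :: "'k::division_ring \<Rightarrow> 'v::ab_group_add \<Rightarrow> 'v"
    and M :: "'v set"
  assumes "left_vector_space scale"
    and "dim_gt_2 scale"
    and "Gr scale \<noteq> {}"
    and "subspace scale M"
    and "\<exists>X\<in>Gr scale. M \<subseteq> X \<and> quot_dim_one scale X M"
  shows "star scale M \<subseteq> Gr scale
    \<and> (\<forall>E\<in>star scale M. \<forall>E'\<in>star scale M. E \<noteq> E' \<longrightarrow> adjacent scale E E')
    \<and> (\<forall>E\<in>Gr scale. \<forall>E'\<in>Gr scale. adjacent scale E E' \<longrightarrow>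
           ((E \<in> star scale M \<and> E' \<in> star scale M) \<longleftrightarrow> E \<inter> E' = M))"
proof -
  interpret left_vector_space scale by (rule assms(1))
  from assms(5) obtain X where "X \<in> Gr scale" "quot_dim_one scale X M" by blast
  then have "star scale M \<subseteq> Gr scale"
    using star_member_in_Gr unfolding star_def by blast
  moreover have "\<forall>E\<in>star scale M. \<forall>E'\<in>star scale M. E \<noteq> E' \<longrightarrow> adjacent scale E E'"
    using star_adjacent by blast
  moreover have "\<forall>E\<in>Gr scale. \<forall>E'\<in>Gr scale. adjacent scale E E' \<longrightarrow>
      ((E \<in> star scale M \<and> E' \<in> star scale M) \<longleftrightarrow> E \<inter> E' = M)"
    using adjacent_in_star_iff unfolding Gr_def by blast
  ultimately show ?thesis by (intro conjI)
qed

end
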